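(* Let $\mathcal A$ be a $C^*$-algebra with identity $1$, $\delta\colon\mathcal A\to\mathcal A$ a $^*$-endomorphism, and $\delta_*$ a complete transfer operator for $(\mathcal A,\delta)$. Suppose $\delta(1)$ lies in the center of $\mathcal A$. Then 1) both triples $(\delta,\ \delta_*(1)\mathcal A,\ \delta(1)\mathcal A)$ and $(\delta_*,\ \delta(1)\mathcal A,\ \delta_*(1)\mathcal A)$ are partial automorphisms of $\mathcal A$ (with $\delta,\delta_*$ restricted to the respective first ideals), and they are inverse to each other; 2) $\delta_*\colon\mathcal A\to\mathcal A$ is an endomorphism.
   Context: A transfer operator for $(\mathcal A,\delta)$ is a continuous positive linear map $\delta_*\colon\mathcal A\to\mathcal A$ such that $\delta_*(\delta(a)b)=a\,\delta_*(b)$ for all $a,b\in\mathcal A$; it is complete if $\delta(\delta_*(a))=\delta(1)a\delta(1)$ for all $a\in\mathcal A$. A partial automorphism of $\mathcal A$ is a triple $(\theta,I,J)$ where $I,J$ are closed two-sided ideals of $\mathcal A$ and $\theta\colon I\to J$ is a $^*$-isomorphism. *)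

theory Defs
  imports "HOL-Analysis.Analysis"
begin

text \<open>A unital C*-algebra is modelled as a real Banach algebra with unit (norm 1 = 1)
  carrying a compatible complex scalar multiplication smul and an involution adj
  satisfying the C*-identity.\<close>

locale unital_cstar_algebra =
  fixes smul :: "complex \<Rightarrow> 'a::{real_normed_algebra_1,banach} \<Rightarrow> 'a"
    and adj :: "'a \<Rightarrow> 'a"
  assumes smul_add_right: "smul c (a + b) = smul c a + smul c b"
    and smul_add_left: "smul (c + d) a = smul c a + smul d a"
    and smul_smul: "smul c (smul d a) = smul (c * d) a"
    and smul_of_real: "smul (complex_of_real r) a = r *\<^sub>R a"
    and smul_mult_left: "smul c (a * b) = smul c a * b"
    and smul_mult_right: "smul c (a * b) = a * smul c b"
    and norm_smul: "norm (smul c a) = cmod c * norm a"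
    and adj_adj: "adj (adj a) = a"
    and adj_add: "adj (a + b) = adj a + adj b"
    and adj_smul: "adj (smul c a) = smul (cnj c) (adj a)"
    and adj_mult: "adj (a * b) = adj b * adj a"
    and cstar_identity: "norm (adj a * a) = (norm a)^2"

definition clinear_map :: "(complex \<Rightarrow> 'a \<Rightarrow> 'a) \<Rightarrow> ('a::{real_normed_algebra_1} \<Rightarrow> 'a) \<Rightarrow> bool" where
  "clinear_map smul f \<longleftrightarrow> (\<forall>a b. f (a + b) = f a + f b) \<and> (\<forall>c a. f (smul c a) = smul c (f a))"

definition star_endo :: "(complex \<Rightarrow> 'a \<Rightarrow> 'a) \<Rightarrow> ('a \<Rightarrow> 'a) \<Rightarrow> ('a::{real_normed_algebra_1} \<Rightarrow> 'a) \<Rightarrow> bool" where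
  "star_endo smul adj f \<longleftrightarrow> clinear_map smul f \<and> (\<forall>a b. f (a * b) = f a * f b) \<and> (\<forall>a. f (adj a) = adj (f a))"

definition invertible_elem :: "'a::real_normed_algebra_1 \<Rightarrow> bool" where
  "invertible_elem a \<longleftrightarrow> (\<exists>b. a * b = 1 \<and> b * a = 1)"

definition cspectrum :: "(complex \<Rightarrow> 'a \<Rightarrow> 'a) \<Rightarrow> 'a::real_normed_algebra_1 \<Rightarrow> complex set" where
  "cspectrum smul a = {z. \<not> invertible_elem (a - smul z 1)}"

definition positive_elem :: "(complex \<Rightarrow> 'a \<Rightarrow> 'a) \<Rightarrow> ('a \<Rightarrow> 'a) \<Rightarrow> 'a::real_normed_algebra_1 \<Rightarrow> bool" where
  "positive_elem smul adj a \<longleftrightarrow> adj a = a \<and> cspectrum smul a \<subseteq> {z. Im z = 0 \<and> Re z \<ge> 0}"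

definition positive_map :: "(complex \<Rightarrow> 'a \<Rightarrow> 'a) \<Rightarrow> ('a \<Rightarrow> 'a) \<Rightarrow> ('a::real_normed_algebra_1 \<Rightarrow> 'a) \<Rightarrow> bool" where
  "positive_map smul adj f \<longleftrightarrow> clinear_map smul f \<and>
     (\<forall>a. positive_elem smul adj a \<longrightarrow> positive_elem smul adj (f a))"

definition transfer_operator :: "(complex \<Rightarrow> 'a \<Rightarrow> 'a) \<Rightarrow> ('a \<Rightarrow> 'a) \<Rightarrow> ('a \<Rightarrow> 'a) \<Rightarrow> ('a::real_normed_algebra_1 \<Rightarrow> 'a) \<Rightarrow> bool" where
  "transfer_operator smul adj \<delta> T \<longleftrightarrow> continuous_on UNIV T \<and> positive_map smul adj T \<and>
     (\<forall>a b. T (\<delta> a * b) = a * T b)"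

definition complete_transfer_operator :: "(complex \<Rightarrow> 'a \<Rightarrow> 'a) \<Rightarrow> ('a \<Rightarrow> 'a) \<Rightarrow> ('a \<Rightarrow> 'a) \<Rightarrow> ('a::real_normed_algebra_1 \<Rightarrow> 'a) \<Rightarrow> bool" where
  "complete_transfer_operator smul adj \<delta> T \<longleftrightarrow> transfer_operator smul adj \<delta> T \<and>
     (\<forall>a. \<delta> (T a) = \<delta> 1 * a * \<delta> 1)"

definition closed_ideal :: "(complex \<Rightarrow> 'a \<Rightarrow> 'a) \<Rightarrow> 'a::real_normed_algebra_1 set \<Rightarrow> bool" where
  "closed_ideal smul I \<longleftrightarrow> closed I \<and> 0 \<in> I \<and> (\<forall>a\<in>I. \<forall>b\<in>I. a + b \<in> I) \<and>
     (\<forall>c. \<forall>a\<in>I. smul c a \<in> I) \<and> (\<forall>a\<in>I. \<forall>x. x * a \<in> I \<and> a * x \<in> I)"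

definition star_iso_on :: "(complex \<Rightarrow> 'a \<Rightarrow> 'a) \<Rightarrow> ('a \<Rightarrow> 'a) \<Rightarrow> ('a::real_normed_algebra_1 \<Rightarrow> 'a) \<Rightarrow> 'a set \<Rightarrow> 'a set \<Rightarrow> bool" where
  "star_iso_on smul adj \<theta> I J \<longleftrightarrow> bij_betw \<theta> I J \<and>
     (\<forall>a\<in>I. \<forall>b\<in>I. \<theta> (a + b) = \<theta> a + \<theta> b \<and> \<theta> (a * b) = \<theta> a * \<theta> b) \<and>
     (\<forall>c. \<forall>a\<in>I. \<theta> (smul c a) = smul c (\<theta> a)) \<and>
     (\<forall>a\<in>I. \<theta> (adj a) = adj (\<theta> a))"

definition partial_automorphism :: "(complex \<Rightarrow> 'a \<Rightarrow> 'a) \<Rightarrow> ('a \<Rightarrow> 'a) \<Rightarrow> ('a::real_normed_algebra_1 \<Rightarrow> 'a) \<Rightarrow> 'a set \<Rightarrow> 'a set \<Rightarrow> bool" where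
  "partial_automorphism smul adj \<theta> I J \<longleftrightarrow> closed_ideal smul I \<and> closed_ideal smul J \<and> star_iso_on smul adj \<theta> I J"

end

theory Submission
  imports Defs
begin

text \<open>Write \<open>p = \<delta> 1\<close> and \<open>q = T 1\<close>. Completeness gives \<open>\<delta> (T a) = p a p = p a\<close> for central \<open>p\<close>, so
  \<open>T (a b) = T (p a b) = T (\<delta> (T a) b) = T a T b\<close>: \<open>T\<close> is multiplicative, and similarly a \<open>*\<close>-map.
  The transfer identity gives \<open>T (\<delta> a) = a q\<close>, whence \<open>\<delta> q = p\<close> and \<open>q\<close> is an idempotent.
  Since \<open>q\<close> is self-adjoint (as \<open>T\<close> is positive), \<open>q x q = x q\<close> forces \<open>q\<close> to be central.
  So the ranges of left multiplication by \<open>q\<close> and by \<open>p\<close> are ideals cut out by central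
  projections, and on them \<open>\<delta>\<close> and \<open>T\<close> are mutually inverse.\<close>

lemma range_mult_idem:
  fixes c :: "'a::semigroup_mult"
  assumes "c * c = c"
  shows "range ((*) c) = {x. c * x = x}"
proof
  show "range ((*) c) \<subseteq> {x. c * x = x}"
    using assms by (auto simp flip: mult.assoc)
  show "{x. c * x = x} \<subseteq> range ((*) c)"
    by (auto intro: range_eqI[of _ "(*) c", OF sym])
qed

lemma star_iso_on_if_star_endo:
  assumes "star_endo smul adj f" and "bij_betw f I J"
  shows "star_iso_on smul adj f I J"
  using assms by (simp add: star_endo_def clinear_map_def star_iso_on_def)

context unital_cstar_algebra
begin

lemma smul_one_left: "smul 1 a = a"
  using smul_of_real[of 1 a] by simp

lemma adj_one: "adj 1 = 1"
  using adj_mult[of "adj 1" 1] by (simp add: adj_adj)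

lemma invertible_smul_one:
  assumes "w \<noteq> 0"
  shows "invertible_elem (smul w 1)"
proof -
  have "smul (1/w) 1 * smul w 1 = 1" "smul w 1 * smul (1/w) 1 = 1"
    using assms by (simp_all add: smul_mult_left[symmetric] smul_smul smul_one_left)
  then show ?thesis
    unfolding invertible_elem_def by blast
qed

lemma cspectrum_one: "cspectrum smul 1 \<subseteq> {1}"
proof
  fix z assume "z \<in> cspectrum smul 1"
  moreover have "1 - smul z 1 = smul (1 - z) 1"
    using smul_add_left[of "1 - z" z 1] by (simp add: smul_one_left algebra_simps)
  ultimately show "z \<in> {1}"
    using invertible_smul_one[of "1 - z"] by (auto simp: cspectrum_def)
qed

lemma positive_elem_one: "positive_elem smul adj 1"
  using cspectrum_one by (auto simp: positive_elem_def adj_one)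

lemma closed_ideal_central_idem:
  assumes idem: "c * c = c" and central: "\<And>y. c * y = y * c"
  shows "closed_ideal smul (range ((*) c))"
  unfolding range_mult_idem[OF idem] closed_ideal_def Ball_def mem_Collect_eq
proof (intro conjI allI impI)
  show "c * 0 = 0"
    by simp
  show "closed {x. c * x = x}"
    by (intro closed_Collect_eq continuous_intros)
  show "c * (a + b) = a + b" if "c * a = a" "c * b = b" for a b
    using that by (simp add: distrib_left)
  show "c * smul d a = smul d a" if "c * a = a" for d a
    using that by (simp flip: smul_mult_right)
  show "c * (x * a) = x * a" "c * (a * x) = a * x" if "c * a = a" for a x
    using that by (metis central mult.assoc)+
qed

end

locale central_complete_transfer = unital_cstar_algebra smul adj
  for smul :: "complex \<Rightarrow> 'a::{real_normed_algebra_1,banach} \<Rightarrow> 'a" and adj +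
  fixes \<delta> T :: "'a \<Rightarrow> 'a"
  assumes star_endo_delta: "star_endo smul adj \<delta>"
    and complete: "complete_transfer_operator smul adj \<delta> T"
    and delta_one_central: "\<delta> 1 * x = x * \<delta> 1"
begin

lemma delta_mult: "\<delta> (a * b) = \<delta> a * \<delta> b"
  and delta_adj: "\<delta> (adj a) = adj (\<delta> a)"
  using star_endo_delta by (simp_all add: star_endo_def clinear_map_def)

lemma T_add: "T (a + b) = T a + T b"
  and T_smul: "T (smul c a) = smul c (T a)"
  and T_delta_mult: "T (\<delta> a * b) = a * T b"
  and delta_T: "\<delta> (T a) = \<delta> 1 * a * \<delta> 1"
  using complete
  by (simp_all add: complete_transfer_operator_def transfer_operator_def positive_map_def
      clinear_map_def)

lemma positive_elem_T_one: "positive_elem smul adj (T 1)"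
  using complete positive_elem_one
  by (simp add: complete_transfer_operator_def transfer_operator_def positive_map_def)

lemma adj_T_one: "adj (T 1) = T 1"
  using positive_elem_T_one by (simp add: positive_elem_def)

lemma delta_one_idem: "\<delta> 1 * \<delta> 1 = \<delta> 1"
  using delta_mult[of 1 1] by simp

lemma adj_delta_one: "adj (\<delta> 1) = \<delta> 1"
  using delta_adj[of 1] by (simp add: adj_one)

lemma delta_one_mult_delta: "\<delta> 1 * \<delta> x = \<delta> x"
  using delta_mult[of 1 x] by simp

lemma T_delta_one_mult: "T (\<delta> 1 * b) = T b"
  using T_delta_mult[of 1 b] by simp

lemma T_delta: "T (\<delta> a) = a * T 1"
  using T_delta_mult[of a 1] by simp

lemma delta_T_eq: "\<delta> (T a) = \<delta> 1 * a"
  by (metis delta_T delta_one_central delta_one_idem mult.assoc)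

lemma delta_T_one: "\<delta> (T 1) = \<delta> 1"
  by (simp add: delta_T_eq)

lemma T_one_idem: "T 1 * T 1 = T 1"
  using T_delta[of "T 1"] T_delta_one_mult[of 1] by (simp add: delta_T_one)

lemma T_one_mult_mult_T_one: "T 1 * x * T 1 = x * T 1"
proof -
  have "\<delta> (T 1 * x) = \<delta> x"
    by (simp add: delta_mult delta_T_one delta_one_mult_delta)
  then show ?thesis
    using T_delta[of "T 1 * x"] T_delta[of x] by simp
qed

lemma T_one_central: "T 1 * y = y * T 1"
proof -
  have "adj (T 1 * adj y * T 1) = adj (adj y * T 1)"
    by (simp only: T_one_mult_mult_T_one)
  then have "T 1 * y * T 1 = T 1 * y"
    by (simp add: adj_mult adj_adj adj_T_one mult.assoc)
  then show ?thesis
    by (simp add: T_one_mult_mult_T_one)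
qed

lemma T_mult: "T (a * b) = T a * T b"
proof -
  have "T (a * b) = T (\<delta> 1 * a * b)"
    by (simp add: mult.assoc T_delta_one_mult)
  also have "\<dots> = T (\<delta> (T a) * b)"
    by (simp add: delta_T_eq)
  finally show ?thesis
    by (simp add: T_delta_mult)
qed

lemma T_adj: "T (adj a) = adj (T a)"
proof -
  have "T (adj a) = T (adj (\<delta> 1 * a))"
    by (simp add: adj_mult adj_delta_one T_delta_one_mult flip: delta_one_central)
  also have "\<dots> = adj (T a) * T 1"
    by (simp add: T_delta flip: delta_T_eq delta_adj)
  also have "\<dots> = adj (T 1 * T a)"
    by (simp add: adj_mult adj_T_one)
  also have "T 1 * T a = T a"
    using T_mult[of 1 a] T_one_idem by simp
  finally show ?thesis .
qed

lemma star_endo_T: "star_endo smul adj T"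
  by (simp add: star_endo_def clinear_map_def T_add T_smul T_mult T_adj)

lemma T_delta_inverse:
  assumes "a \<in> range ((*) (T 1))"
  shows "T (\<delta> a) = a"
proof -
  have "T 1 * a = a"
    using assms range_mult_idem[OF T_one_idem] by simp
  then show ?thesis
    by (simp add: T_delta flip: T_one_central)
qed

lemma delta_T_inverse: "a \<in> range ((*) (\<delta> 1)) \<Longrightarrow> \<delta> (T a) = a"
  by (auto simp: delta_T_eq delta_one_idem simp flip: mult.assoc)

lemma T_in_range: "T a \<in> range ((*) (T 1))"
  using T_mult[of 1 a] by auto

lemma delta_in_range: "\<delta> a \<in> range ((*) (\<delta> 1))"
  using delta_mult[of 1 a] by auto

lemma bij_betw_delta: "bij_betw \<delta> (range ((*) (T 1))) (range ((*) (\<delta> 1)))"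
  by (rule bij_betw_byWitness[where f' = T])
    (use T_delta_inverse delta_T_inverse T_in_range delta_in_range in auto)

lemma bij_betw_T: "bij_betw T (range ((*) (\<delta> 1))) (range ((*) (T 1)))"
  by (rule bij_betw_byWitness[where f' = \<delta>])
    (use T_delta_inverse delta_T_inverse T_in_range delta_in_range in auto)

lemma closed_ideal_T_one: "closed_ideal smul (range ((*) (T 1)))"
  by (rule closed_ideal_central_idem[OF T_one_idem T_one_central])

lemma closed_ideal_delta_one: "closed_ideal smul (range ((*) (\<delta> 1)))"
  by (rule closed_ideal_central_idem[OF delta_one_idem delta_one_central])

end

theorem proposition6:
  fixes smul :: "complex \<Rightarrow> 'a::{real_normed_algebra_1,banach} \<Rightarrow> 'a"
    and adj :: "'a \<Rightarrow> 'a" and \<delta> T :: "'a \<Rightarrow> 'a"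
  assumes "unital_cstar_algebra smul adj"
    and "star_endo smul adj \<delta>"
    and "complete_transfer_operator smul adj \<delta> T"
    and "\<forall>x. \<delta> 1 * x = x * \<delta> 1"
  shows "partial_automorphism smul adj \<delta> (range (\<lambda>a. T 1 * a)) (range (\<lambda>a. \<delta> 1 * a))
       \<and> partial_automorphism smul adj T (range (\<lambda>a. \<delta> 1 * a)) (range (\<lambda>a. T 1 * a))
       \<and> (\<forall>a \<in> range (\<lambda>a. T 1 * a). T (\<delta> a) = a)
       \<and> (\<forall>a \<in> range (\<lambda>a. \<delta> 1 * a). \<delta> (T a) = a)
       \<and> star_endo smul adj T"
proof -
  interpret central_complete_transfer smul adj \<delta> T
    using assms by (simp add: central_complete_transfer_def central_complete_transfer_axioms_def)
  show ?thesis
    unfolding partial_automorphism_def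
    using closed_ideal_T_one closed_ideal_delta_one
      star_iso_on_if_star_endo[OF star_endo_delta bij_betw_delta]
      star_iso_on_if_star_endo[OF star_endo_T bij_betw_T]
      T_delta_inverse delta_T_inverse star_endo_T
    by blast
qed

end
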